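(* In the setting below, let $D(\alpha)=\mathrm{Var}_{\rho}(E_{loc})-\mathrm{Var}_{\phi_\alpha}(E_{loc}\kappa_\alpha)$. Then: (i) if $0\le\alpha\le 2$, then $D(\alpha)\ge 0$; (ii) if $\alpha<0$ or $\alpha>2$, then $D(\alpha)\le 0$; (iii) $D(0)=0$, $D(2)=0$, and $D(1)=\mathrm{Var}_\rho(|E_{loc}|)\ge 0$.
   Context: Let $\mathbb{V}=\{-1,1\}^n$, let $\rho:\mathbb{V}\to(0,1]$, $v\mapsto\rho^v_v$, be a probability distribution, and let $E_{loc}:\mathbb{V}\to\mathbb{R}$ satisfy $E_{loc}(v)\ne 0$ for all $v$. For $\alpha\in\mathbb{R}$ set $\lambda_\alpha=\big(\sum_v|E_{loc}(v)|^\alpha\rho^v_v\big)^{-1}$, $\kappa_\alpha(v)=1/(\lambda_\alpha|E_{loc}(v)|^\alpha)$, and $\phi_\alpha(v)=\lambda_\alpha|E_{loc}(v)|^\alpha\rho^v_v$ (a probability distribution with $\rho^v_v=\kappa_\alpha(v)\phi_\alpha(v)$). For a probability distribution $q$ on $\mathbb{V}$, $\mathrm{Var}_q(f)=\sum_vq(v)f(v)^2-(\sum_vq(v)f(v))^2$. *)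

theory Defs
  imports "HOL-Analysis.Analysis"
begin

definition spins :: "nat \<Rightarrow> int list set" where
  "spins n = {v. length v = n \<and> set v \<subseteq> {-1, 1}}"

definition Var :: "'a set \<Rightarrow> ('a \<Rightarrow> real) \<Rightarrow> ('a \<Rightarrow> real) \<Rightarrow> real" where
  "Var V q f = (\<Sum>v\<in>V. q v * (f v)\<^sup>2) - (\<Sum>v\<in>V. q v * f v)\<^sup>2"

definition lam :: "'a set \<Rightarrow> ('a \<Rightarrow> real) \<Rightarrow> ('a \<Rightarrow> real) \<Rightarrow> real \<Rightarrow> real" where
  "lam V \<rho> E \<alpha> = 1 / (\<Sum>v\<in>V. \<bar>E v\<bar> powr \<alpha> * \<rho> v)"

definition kappa :: "'a set \<Rightarrow> ('a \<Rightarrow> real) \<Rightarrow> ('a \<Rightarrow> real) \<Rightarrow> real \<Rightarrow> 'a \<Rightarrow> real" where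
  "kappa V \<rho> E \<alpha> v = 1 / (lam V \<rho> E \<alpha> * \<bar>E v\<bar> powr \<alpha>)"

definition phi :: "'a set \<Rightarrow> ('a \<Rightarrow> real) \<Rightarrow> ('a \<Rightarrow> real) \<Rightarrow> real \<Rightarrow> 'a \<Rightarrow> real" where
  "phi V \<rho> E \<alpha> v = lam V \<rho> E \<alpha> * \<bar>E v\<bar> powr \<alpha> * \<rho> v"

definition Dfun :: "'a set \<Rightarrow> ('a \<Rightarrow> real) \<Rightarrow> ('a \<Rightarrow> real) \<Rightarrow> real \<Rightarrow> real" where
  "Dfun V \<rho> E \<alpha> = Var V \<rho> E - Var V (phi V \<rho> E \<alpha>) (\<lambda>v. E v * kappa V \<rho> E \<alpha> v)"

end

theory Submission
  imports Defs
begin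

text \<open>
  Write \<open>M \<beta>\<close> for the absolute moment \<open>\<Sum>\<^sub>v \<rho> v |E v|^\<beta>\<close>. Both variances have
  the same mean \<open>\<Sum>\<^sub>v \<rho> v E v\<close>, and the second moment of \<open>E \<kappa>\<^sub>\<alpha>\<close> under \<open>\<phi>\<^sub>\<alpha>\<close> is
  \<open>M \<alpha> * M (2 - \<alpha>)\<close>, so \<open>D(\<alpha>) = M 0 * M 2 - M \<alpha> * M (2 - \<alpha>)\<close>. Since
  \<open>|E|^\<alpha> |E|^(2-\<alpha>) = E\<^sup>2\<close>, Chebyshev's sum identity turns this into half of
  \<open>\<Sum>\<^sub>v\<^sub>,\<^sub>w \<rho> v \<rho> w (|E v|^\<alpha> - |E w|^\<alpha>) (|E v|^(2-\<alpha>) - |E w|^(2-\<alpha>))\<close>,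
  and every summand has the sign of \<open>\<alpha> (2 - \<alpha>)\<close> because \<open>t \<mapsto> t^\<beta>\<close> is increasing on
  the positive reals for \<open>\<beta> > 0\<close> and decreasing for \<open>\<beta> < 0\<close>.
\<close>

lemma finite_spins: "finite (spins n)"
proof -
  have "spins n = {xs. set xs \<subseteq> {-1, 1} \<and> length xs = n}"
    by (auto simp: spins_def)
  then show ?thesis
    by (simp add: finite_lists_length_eq)
qed

lemma powr_diff_mult_diff_sign:
  fixes x y a :: real
  assumes "0 < x" "0 < y"
  shows "0 \<le> a * ((x powr a - y powr a) * (x - y))"
proof (cases "0 \<le> a")
  case True
  have "0 \<le> (x powr a - y powr a) * (x - y)"
    using assms True powr_mono2[of a x y] powr_mono2[of a y x]
    by (cases "x \<le> y") (auto intro: mult_nonpos_nonpos)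
  with True show ?thesis by simp
next
  case False
  have "(x powr a - y powr a) * (x - y) \<le> 0"
    using assms False powr_mono2'[of a x y] powr_mono2'[of a y x]
    by (cases "x \<le> y") (auto intro: mult_nonneg_nonpos mult_nonpos_nonneg)
  with False show ?thesis by (simp add: mult_nonpos_nonpos)
qed

lemma powr_diff_mult_powr_diff_sign:
  fixes x y a b :: real
  assumes "0 < x" "0 < y"
  shows "0 \<le> (a * b) * ((x powr a - y powr a) * (x powr b - y powr b))"
proof (cases "x = y")
  case False
  have "0 \<le> (a * ((x powr a - y powr a) * (x - y))) * (b * ((x powr b - y powr b) * (x - y)))"
    using assms by (intro mult_nonneg_nonneg powr_diff_mult_diff_sign)
  also have "\<dots> = ((a * b) * ((x powr a - y powr a) * (x powr b - y powr b))) * (x - y)\<^sup>2"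
    by (simp add: power2_eq_square algebra_simps)
  finally show ?thesis
    using False by (simp add: zero_le_mult_iff)
qed simp

lemma powr_diff_mult_powr_diff_nonneg:
  fixes x y a b :: real
  assumes "0 < x" "0 < y" "0 \<le> a * b"
  shows "0 \<le> (x powr a - y powr a) * (x powr b - y powr b)"
proof (cases "a * b = 0")
  case False
  define P where "P = (x powr a - y powr a) * (x powr b - y powr b)"
  have "0 \<le> (a * b) * P"
    using powr_diff_mult_powr_diff_sign[OF assms(1,2)] by (simp add: P_def)
  moreover have "0 < a * b"
    using assms(3) False by linarith
  ultimately show ?thesis
    by (simp add: P_def[symmetric] zero_le_mult_iff)
qed (use assms in auto)

lemma powr_diff_mult_powr_diff_nonpos:
  fixes x y a b :: real
  assumes "0 < x" "0 < y" "a * b \<le> 0"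
  shows "(x powr a - y powr a) * (x powr b - y powr b) \<le> 0"
proof (cases "a * b = 0")
  case False
  define P where "P = (x powr a - y powr a) * (x powr b - y powr b)"
  have "0 \<le> (a * b) * P"
    using powr_diff_mult_powr_diff_sign[OF assms(1,2)] by (simp add: P_def)
  moreover have "a * b < 0"
    using assms(3) False by linarith
  ultimately show ?thesis
    unfolding P_def[symmetric] by (meson mult_neg_pos not_le)
qed (use assms in auto)

lemma sum_sum_weighted_diff_mult_diff:
  fixes p f g :: "'a \<Rightarrow> 'b::comm_ring_1"
  shows "(\<Sum>v\<in>V. \<Sum>w\<in>V. p v * p w * ((f v - f w) * (g v - g w)))
    = 2 * (sum p V * (\<Sum>v\<in>V. p v * (f v * g v)) - (\<Sum>v\<in>V. p v * f v) * (\<Sum>v\<in>V. p v * g v))"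
proof -
  define h where "h v = p v * (f v * g v)" for v
  define pf where "pf v = p v * f v" for v
  define pg where "pg v = p v * g v" for v
  have "(\<Sum>v\<in>V. \<Sum>w\<in>V. p v * p w * ((f v - f w) * (g v - g w)))
      = (\<Sum>v\<in>V. \<Sum>w\<in>V. p w * h v + p v * h w - pf v * pg w - pf w * pg v)"
    unfolding h_def pf_def pg_def by (intro sum.cong) (simp_all add: algebra_simps)
  also have "\<dots> = (\<Sum>v\<in>V. \<Sum>w\<in>V. p w * h v) + (\<Sum>v\<in>V. \<Sum>w\<in>V. p v * h w)
      - (\<Sum>v\<in>V. \<Sum>w\<in>V. pf v * pg w) - (\<Sum>v\<in>V. \<Sum>w\<in>V. pf w * pg v)"
    by (simp only: sum.distrib sum_subtractf)
  also have "\<dots> = 2 * (sum p V * sum h V - sum pf V * sum pg V)"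
    by (simp only: sum.swap[of "\<lambda>v w. p w * h v"] sum.swap[of "\<lambda>v w. pf w * pg v"]
        sum_product[symmetric]) (simp add: algebra_simps)
  finally show ?thesis
    by (simp only: h_def[abs_def] pf_def[abs_def] pg_def[abs_def])
qed

lemma abs_powr_mult_abs_powr_complement:
  fixes x a :: real
  shows "\<bar>x\<bar> powr a * \<bar>x\<bar> powr (2 - a) = x\<^sup>2"
  by (simp add: powr_add[symmetric])

definition abs_moment :: "'a set \<Rightarrow> ('a \<Rightarrow> real) \<Rightarrow> ('a \<Rightarrow> real) \<Rightarrow> real \<Rightarrow> real" where
  "abs_moment V \<rho> E \<beta> = (\<Sum>v\<in>V. \<rho> v * \<bar>E v\<bar> powr \<beta>)"

lemma lam_eq_inverse_abs_moment: "lam V \<rho> E \<alpha> = 1 / abs_moment V \<rho> E \<alpha>"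
  by (simp add: lam_def abs_moment_def mult.commute)

locale reweighting =
  fixes V :: "'a set" and \<rho> E :: "'a \<Rightarrow> real"
  assumes finite_V: "finite V"
    and rho_pos: "\<And>v. v \<in> V \<Longrightarrow> 0 < \<rho> v"
    and rho_sum: "sum \<rho> V = 1"
    and E_nonzero: "\<And>v. v \<in> V \<Longrightarrow> E v \<noteq> 0"
begin

abbreviation M :: "real \<Rightarrow> real" where
  "M \<equiv> abs_moment V \<rho> E"

lemma abs_moment_pos: "0 < M \<beta>"
proof -
  have "V \<noteq> {}"
    using rho_sum by auto
  then show ?thesis
    unfolding abs_moment_def using finite_V rho_pos E_nonzero by (intro sum_pos) auto
qed

lemma abs_moment_0: "M 0 = 1"
  using rho_sum E_nonzero by (simp add: abs_moment_def)

lemma abs_moment_1: "M 1 = (\<Sum>v\<in>V. \<rho> v * \<bar>E v\<bar>)"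
  by (simp add: abs_moment_def)

lemma abs_moment_2: "M 2 = (\<Sum>v\<in>V. \<rho> v * (E v)\<^sup>2)"
  by (simp add: abs_moment_def)

lemma phi_mult_E_kappa: "v \<in> V \<Longrightarrow> phi V \<rho> E \<alpha> v * (E v * kappa V \<rho> E \<alpha> v) = \<rho> v * E v"
  using abs_moment_pos[of \<alpha>] E_nonzero[of v]
  by (simp add: phi_def kappa_def lam_eq_inverse_abs_moment)

lemma phi_mult_E_kappa_squared:
  assumes "v \<in> V"
  shows "phi V \<rho> E \<alpha> v * (E v * kappa V \<rho> E \<alpha> v)\<^sup>2 = M \<alpha> * (\<rho> v * \<bar>E v\<bar> powr (2 - \<alpha>))"
proof -
  have "\<bar>E v\<bar> powr \<alpha> \<noteq> 0"
    using E_nonzero[OF assms] by simp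
  then show ?thesis
    using abs_moment_pos[of \<alpha>] abs_powr_mult_abs_powr_complement[of "E v" \<alpha>]
    by (simp add: phi_def kappa_def lam_eq_inverse_abs_moment field_simps power2_eq_square)
qed

lemma Var_phi_E_kappa:
  "Var V (phi V \<rho> E \<alpha>) (\<lambda>v. E v * kappa V \<rho> E \<alpha> v) = M \<alpha> * M (2 - \<alpha>) - (\<Sum>v\<in>V. \<rho> v * E v)\<^sup>2"
  by (simp add: Var_def phi_mult_E_kappa phi_mult_E_kappa_squared abs_moment_def sum_distrib_left
      cong: sum.cong)

lemma Dfun_eq_abs_moments: "Dfun V \<rho> E \<alpha> = M 0 * M 2 - M \<alpha> * M (2 - \<alpha>)"
  unfolding Dfun_def Var_phi_E_kappa by (simp add: Var_def abs_moment_0 abs_moment_2)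

lemma Dfun_eq_double_sum:
  "2 * Dfun V \<rho> E \<alpha> = (\<Sum>v\<in>V. \<Sum>w\<in>V. \<rho> v * \<rho> w *
     ((\<bar>E v\<bar> powr \<alpha> - \<bar>E w\<bar> powr \<alpha>) * (\<bar>E v\<bar> powr (2 - \<alpha>) - \<bar>E w\<bar> powr (2 - \<alpha>))))"
proof -
  have "M 0 * M 2 = sum \<rho> V * (\<Sum>v\<in>V. \<rho> v * (\<bar>E v\<bar> powr \<alpha> * \<bar>E v\<bar> powr (2 - \<alpha>)))"
    by (simp add: abs_moment_0 abs_moment_2 rho_sum abs_powr_mult_abs_powr_complement)
  then show ?thesis
    by (simp add: Dfun_eq_abs_moments sum_sum_weighted_diff_mult_diff abs_moment_def)
qed

lemma Dfun_nonneg: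
  assumes "0 \<le> \<alpha> * (2 - \<alpha>)"
  shows "0 \<le> Dfun V \<rho> E \<alpha>"
proof -
  have "0 \<le> 2 * Dfun V \<rho> E \<alpha>"
    unfolding Dfun_eq_double_sum using rho_pos E_nonzero assms
    by (intro sum_nonneg mult_nonneg_nonneg[OF _ powr_diff_mult_powr_diff_nonneg])
      (auto simp: less_imp_le)
  then show ?thesis by simp
qed

lemma Dfun_nonpos:
  assumes "\<alpha> * (2 - \<alpha>) \<le> 0"
  shows "Dfun V \<rho> E \<alpha> \<le> 0"
proof -
  have "2 * Dfun V \<rho> E \<alpha> \<le> 0"
    unfolding Dfun_eq_double_sum using rho_pos E_nonzero assms
    by (intro sum_nonpos mult_nonneg_nonpos[OF _ powr_diff_mult_powr_diff_nonpos])
      (auto simp: less_imp_le)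
  then show ?thesis by simp
qed

lemma Dfun_1: "Dfun V \<rho> E 1 = Var V \<rho> (\<lambda>v. \<bar>E v\<bar>)"
  by (simp add: Dfun_eq_abs_moments abs_moment_0 abs_moment_1 abs_moment_2 Var_def power2_eq_square)

end

theorem lemmaC3:
  fixes n :: nat and \<rho> :: "int list \<Rightarrow> real" and E :: "int list \<Rightarrow> real"
  assumes rho_pos: "\<forall>v\<in>spins n. 0 < \<rho> v \<and> \<rho> v \<le> 1"
    and rho_sum: "(\<Sum>v\<in>spins n. \<rho> v) = 1"
    and E_nz: "\<forall>v\<in>spins n. E v \<noteq> 0"
  shows "(\<forall>\<alpha>::real. 0 \<le> \<alpha> \<and> \<alpha> \<le> 2 \<longrightarrow> Dfun (spins n) \<rho> E \<alpha> \<ge> 0)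
       \<and> (\<forall>\<alpha>::real. \<alpha> < 0 \<or> \<alpha> > 2 \<longrightarrow> Dfun (spins n) \<rho> E \<alpha> \<le> 0)
       \<and> Dfun (spins n) \<rho> E 0 = 0
       \<and> Dfun (spins n) \<rho> E 2 = 0
       \<and> Dfun (spins n) \<rho> E 1 = Var (spins n) \<rho> (\<lambda>v. \<bar>E v\<bar>)
       \<and> Var (spins n) \<rho> (\<lambda>v. \<bar>E v\<bar>) \<ge> 0"
proof -
  interpret reweighting "spins n" \<rho> E
    using finite_spins rho_pos rho_sum E_nz by unfold_locales auto
  have "0 \<le> \<alpha> * (2 - \<alpha>)" if "0 \<le> \<alpha>" "\<alpha> \<le> 2" for \<alpha> :: real
    using that by simp
  moreover have "\<alpha> * (2 - \<alpha>) \<le> 0" if "\<alpha> < 0 \<or> \<alpha> > 2" for \<alpha> :: real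
    using that by (auto simp: mult_le_0_iff)
  moreover have "0 \<le> Var (spins n) \<rho> (\<lambda>v. \<bar>E v\<bar>)"
    using Dfun_nonneg[of 1] by (simp add: Dfun_1)
  moreover have "Dfun (spins n) \<rho> E 0 = 0" "Dfun (spins n) \<rho> E 2 = 0"
    by (simp_all add: Dfun_eq_abs_moments)
  ultimately show ?thesis
    using Dfun_nonneg Dfun_nonpos Dfun_1 by simp
qed

end
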